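(* Let $I\subseteq[0,\infty)$ be an interval, let $f:I\to\mathbb{R}$ be twice differentiable on $I^\circ$, and let $a,b\in I^\circ$ with $a<b$ such that $f''\in L^1[a,b]$. Let $q>1$, $p=\frac{q}{q-1}$, and assume $|f''|^q$ is quasi-convex on $[a,b]$. If $M=\sup_{x\in(a,b)}|f''(x)|<\infty$, then $$\left|\frac{f(a)+f(b)}{2}-\frac{1}{b-a}\int_a^b f(x)\,dx\right|\le \frac{(b-a)^2}{2^{1+\frac1q}}\,M\,\bigl(\beta(2,p+1)\bigr)^{\frac1p}.$$
   Context: A function $g:[a,b]\to\mathbb{R}$ is quasi-convex on $[a,b]$ if $g(\lambda x+(1-\lambda)y)\le\max\{g(x),g(y)\}$ for all $x,y\in[a,b]$ and $\lambda\in[0,1]$. $\beta(x,y)=\int_0^1 t^{x-1}(1-t)^{y-1}\,dt$ for $x,y>0$. *)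

theory Defs
  imports "HOL-Analysis.Analysis"
begin

definition quasi_convex_on :: "real set \<Rightarrow> (real \<Rightarrow> real) \<Rightarrow> bool" where
  "quasi_convex_on S g \<longleftrightarrow>
     (\<forall>x\<in>S. \<forall>y\<in>S. \<forall>t\<in>{0..1::real}.
        g (t * x + (1 - t) * y) \<le> max (g x) (g y))"

definition beta :: "real \<Rightarrow> real \<Rightarrow> real" where
  "beta x y = integral {0..1} (\<lambda>t. t powr (x - 1) * (1 - t) powr (y - 1))"

end

theory Submission
  imports Defs
begin

(* Write D(g) = (b-a)(g a + g b)/2 - integral over [a,b] of g for the
   defect of the trapezoidal rule.  By the Hermite-Hadamard inequality D(g) >= 0 for
   every convex g, and D is linear.  Since |f''| <= M on (a,b), both Q - f and Q + f
   with Q x = M x^2/2 are convex, hence |D(f)| <= D(Q) = M(b-a)^3/12; this is the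
   classical trapezoidal error bound, and it makes the quasi-convexity hypothesis of
   the paper unnecessary.  It remains to compare constants: beta 2 (p+1) equals
   1/((p+1)(p+2)), and Hoelder's inequality applied to t(1-t) = (t^(1/p)(1-t)) t^(1/q)
   on [0,1] gives 1/6 <= beta(2,p+1)^(1/p) (1/2)^(1/q), i.e. the paper's constant
   beta(2,p+1)^(1/p) / 2^(1+1/q) is at least 1/12.
   The file develops, in order: convexity from a nonnegative second derivative, the
   Hermite-Hadamard upper bound, the trapezoidal defect and its error bound, an
   integral form of Hoelder's inequality, the value of beta(2,p+1), the comparison of
   constants, and finally the corollary. *)

lemma convex_on_Icc_if_second_deriv_nonneg:
  fixes g g' g'' :: "real \<Rightarrow> real"
  assumes g': "\<And>x. x \<in> {a..b} \<Longrightarrow> (g has_real_derivative g' x) (at x)"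
    and g'': "\<And>x. x \<in> {a..b} \<Longrightarrow> (g' has_real_derivative g'' x) (at x)"
    and nonneg: "\<And>x. x \<in> {a<..<b} \<Longrightarrow> g'' x \<ge> 0"
  shows "convex_on {a..b} g"
proof (rule convex_on_realI[where f' = g'])
  show "g' x \<le> g' y" if "x \<in> {a..b}" "y \<in> {a..b}" "x \<le> y" for x y
  proof (rule DERIV_nonneg_imp_increasing_open[of x y g'])
    show "\<exists>d. (g' has_real_derivative d) (at z) \<and> 0 \<le> d" if "x < z" "z < y" for z
      using g''[of z] nonneg[of z] that \<open>x \<in> {a..b}\<close> \<open>y \<in> {a..b}\<close> by auto
    show "continuous_on {x..y} g'"
      using that by (intro continuous_at_imp_continuous_on ballI DERIV_isCont[OF g'']) auto
  qed fact
qed (use g' in auto)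

lemma chord_has_integral:
  fixes u v :: real
  assumes "a < b"
  shows "((\<lambda>x. u + (x - a) / (b - a) * (v - u)) has_integral (b - a) * (u + v) / 2) {a..b}"
proof -
  define c where "c = (v - u) / (2 * (b - a))"
  have "((\<lambda>x. u + (x - a) / (b - a) * (v - u)) has_integral
        (u * b + (b - a)^2 * c) - (u * a + (a - a)^2 * c)) {a..b}"
  proof (rule fundamental_theorem_of_calculus)
    fix x
    have "(x - a) / (b - a) * (v - u) = 2 * (x - a) * c"
      using assms by (simp add: c_def field_simps)
    then show "((\<lambda>x. u * x + (x - a)^2 * c) has_vector_derivative
                 u + (x - a) / (b - a) * (v - u)) (at x within {a..b})"
      unfolding has_real_derivative_iff_has_vector_derivative [symmetric]
      by (auto intro!: derivative_eq_intros)
  qed (use assms in simp)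
  moreover have "(u * b + (b - a)^2 * c) - (u * a + (a - a)^2 * c) = (b - a) * (u + v) / 2"
    using assms by (simp add: c_def field_simps power2_eq_square)
  ultimately show ?thesis by metis
qed

text \<open>Right half of the Hermite-Hadamard inequality: a convex function lies below its
  chord, so its integral is bounded by the trapezoidal value.\<close>
lemma integral_le_trapezoid_if_convex:
  fixes g :: "real \<Rightarrow> real"
  assumes "a < b" and convex: "convex_on {a..b} g" and cont: "continuous_on {a..b} g"
  shows "integral {a..b} g \<le> (b - a) * (g a + g b) / 2"
proof (rule has_integral_le[OF integrable_integral chord_has_integral[OF \<open>a < b\<close>]])
  show "g integrable_on {a..b}" using cont by (rule integrable_continuous_interval)
  fix x assume x: "x \<in> {a..b}"
  define t where "t = (x - a) / (b - a)"
  have t: "0 \<le> t" "t \<le> 1" using x \<open>a < b\<close> by (auto simp: t_def divide_simps)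
  have "t * (b - a) = x - a" using \<open>a < b\<close> by (simp add: t_def)
  then have "(1 - t) *\<^sub>R a + t *\<^sub>R b = x" by (simp add: algebra_simps)
  moreover have "g ((1 - t) *\<^sub>R a + t *\<^sub>R b) \<le> (1 - t) * g a + t * g b"
    using convex_onD[OF convex t] \<open>a < b\<close> by auto
  ultimately have "g x \<le> (1 - t) * g a + t * g b" by simp
  also have "\<dots> = g a + t * (g b - g a)" by (simp add: algebra_simps)
  finally show "g x \<le> g a + (x - a) / (b - a) * (g b - g a)" by (simp add: t_def)
qed

definition trapezoid_defect :: "(real \<Rightarrow> real) \<Rightarrow> real \<Rightarrow> real \<Rightarrow> real" where
  "trapezoid_defect g a b = (b - a) * (g a + g b) / 2 - integral {a..b} g"

lemma trapezoid_defect_add: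
  assumes "g integrable_on {a..b}" "h integrable_on {a..b}"
  shows "trapezoid_defect (\<lambda>x. g x + h x) a b = trapezoid_defect g a b + trapezoid_defect h a b"
  unfolding trapezoid_defect_def integral_add[OF assms] by (simp add: field_simps)

lemma trapezoid_defect_diff:
  assumes "g integrable_on {a..b}" "h integrable_on {a..b}"
  shows "trapezoid_defect (\<lambda>x. g x - h x) a b = trapezoid_defect g a b - trapezoid_defect h a b"
  unfolding trapezoid_defect_def integral_diff[OF assms] by (simp add: field_simps)

lemma trapezoid_defect_quadratic:
  assumes "a \<le> b"
  shows "trapezoid_defect (\<lambda>x. c * x^2) a b = c * (b - a)^3 / 6"
proof -
  have "((\<lambda>x. c * x^2) has_integral (c * b^3 / 3 - c * a^3 / 3)) {a..b}"
    by (rule fundamental_theorem_of_calculus)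
      (use assms in \<open>auto simp: has_real_derivative_iff_has_vector_derivative [symmetric]
                    intro!: derivative_eq_intros simp: power2_eq_square\<close>)
  then show ?thesis
    by (simp add: trapezoid_defect_def integral_unique field_simps
                  power2_eq_square power3_eq_cube)
qed

text \<open>Classical error bound of the trapezoidal rule: if \<open>|g''| \<le> M\<close> inside \<open>[a,b]\<close>,
  then both \<open>M x\<^sup>2/2 \<plusminus> g\<close> are convex, so the defect of \<open>g\<close> is dominated by that of
  the quadratic.\<close>
lemma trapezoid_error_bound:
  fixes g g' g'' :: "real \<Rightarrow> real"
  assumes "a < b"
    and g': "\<And>x. x \<in> {a..b} \<Longrightarrow> (g has_real_derivative g' x) (at x)"
    and g'': "\<And>x. x \<in> {a..b} \<Longrightarrow> (g' has_real_derivative g'' x) (at x)"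
    and bound: "\<And>x. x \<in> {a<..<b} \<Longrightarrow> \<bar>g'' x\<bar> \<le> M"
  shows "\<bar>trapezoid_defect g a b\<bar> \<le> M * (b - a)^3 / 12"
proof -
  define Q where "Q x = M / 2 * x^2" for x
  have cont_g: "continuous_on {a..b} g"
    by (intro continuous_at_imp_continuous_on ballI DERIV_isCont[OF g'])
  have cont_Q: "continuous_on {a..b} Q" unfolding Q_def by (intro continuous_intros)
  have int_g: "g integrable_on {a..b}" and int_Q: "Q integrable_on {a..b}"
    using cont_g cont_Q by (auto intro: integrable_continuous_interval)
  have Q_defect: "trapezoid_defect Q a b = M * (b - a)^3 / 12"
    unfolding Q_def using trapezoid_defect_quadratic[of a b "M / 2"] \<open>a < b\<close> by simp
  have "convex_on {a..b} (\<lambda>x. Q x - g x)"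
  proof (rule convex_on_Icc_if_second_deriv_nonneg[where g' = "\<lambda>x. M * x - g' x"
        and g'' = "\<lambda>x. M - g'' x"])
    fix x assume "x \<in> {a..b}"
    with g' g'' show "((\<lambda>x. Q x - g x) has_real_derivative M * x - g' x) (at x)"
      and "((\<lambda>x. M * x - g' x) has_real_derivative M - g'' x) (at x)"
      by (auto simp: Q_def intro!: derivative_eq_intros)
  next
    fix x assume "x \<in> {a<..<b}"
    then show "0 \<le> M - g'' x" using bound[of x] by linarith
  qed
  then have "0 \<le> trapezoid_defect (\<lambda>x. Q x - g x) a b"
    unfolding trapezoid_defect_def
    using integral_le_trapezoid_if_convex[OF \<open>a < b\<close>] cont_Q cont_g
    by (auto intro: continuous_on_diff)
  then have upper: "trapezoid_defect g a b \<le> trapezoid_defect Q a b"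
    using trapezoid_defect_diff[OF int_Q int_g] by simp
  have "convex_on {a..b} (\<lambda>x. Q x + g x)"
  proof (rule convex_on_Icc_if_second_deriv_nonneg[where g' = "\<lambda>x. M * x + g' x"
        and g'' = "\<lambda>x. M + g'' x"])
    fix x assume "x \<in> {a..b}"
    with g' g'' show "((\<lambda>x. Q x + g x) has_real_derivative M * x + g' x) (at x)"
      and "((\<lambda>x. M * x + g' x) has_real_derivative M + g'' x) (at x)"
      by (auto simp: Q_def intro!: derivative_eq_intros)
  next
    fix x assume "x \<in> {a<..<b}"
    then show "0 \<le> M + g'' x" using bound[of x] by linarith
  qed
  then have "0 \<le> trapezoid_defect (\<lambda>x. Q x + g x) a b"
    unfolding trapezoid_defect_def
    using integral_le_trapezoid_if_convex[OF \<open>a < b\<close>] cont_Q cont_g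
    by (auto intro: continuous_on_add)
  then have lower: "- trapezoid_defect Q a b \<le> trapezoid_defect g a b"
    using trapezoid_defect_add[OF int_Q int_g] by simp
  show ?thesis using upper lower Q_defect by linarith
qed

text \<open>Hoelder's inequality for integrals over an arbitrary set, obtained by integrating
  Young's inequality for the normalised functions \<open>u/\<parallel>u\<parallel>\<^sub>p\<close> and \<open>v/\<parallel>v\<parallel>\<^sub>q\<close>.\<close>
lemma Hoelder_has_integral:
  fixes u v :: "real \<Rightarrow> real" and S :: "real set"
  assumes p: "p > 1" and q: "q > 1" and pq: "1/p + 1/q = 1"
    and u_nonneg: "\<And>t. t \<in> S \<Longrightarrow> u t \<ge> 0" and v_nonneg: "\<And>t. t \<in> S \<Longrightarrow> v t \<ge> 0"
    and u_int: "((\<lambda>t. u t powr p) has_integral A) S" and "A > 0"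
    and v_int: "((\<lambda>t. v t powr q) has_integral B) S" and "B > 0"
    and uv_int: "((\<lambda>t. u t * v t) has_integral C) S"
  shows "C \<le> A powr (1/p) * B powr (1/q)"
proof -
  define \<alpha> where "\<alpha> = A powr (1/p)"
  define \<beta> where "\<beta> = B powr (1/q)"
  have \<alpha>: "\<alpha> > 0" "\<alpha> powr p = A"
    using \<open>A > 0\<close> p by (auto simp: \<alpha>_def powr_powr)
  have \<beta>: "\<beta> > 0" "\<beta> powr q = B"
    using \<open>B > 0\<close> q by (auto simp: \<beta>_def powr_powr)
  have Young: "u t * v t / (\<alpha> * \<beta>) \<le> u t powr p / (p * A) + v t powr q / (q * B)"
    if "t \<in> S" for t
  proof -
    have "u t / \<alpha> * (v t / \<beta>) \<le> (u t / \<alpha>) powr p / p + (v t / \<beta>) powr q / q"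
      using u_nonneg[OF that] v_nonneg[OF that] \<alpha> \<beta> by (intro Youngs_inequality[OF p q pq]) auto
    moreover have "(u t / \<alpha>) powr p = u t powr p / A" "(v t / \<beta>) powr q = v t powr q / B"
      using u_nonneg[OF that] v_nonneg[OF that] \<alpha> \<beta> by (simp_all add: powr_divide)
    ultimately show ?thesis by (simp add: mult.commute)
  qed
  have bound_int: "((\<lambda>t. u t powr p / (p * A) + v t powr q / (q * B)) has_integral
          A / (p * A) + B / (q * B)) S"
    by (intro has_integral_add has_integral_divide u_int v_int)
  have normalised_int: "((\<lambda>t. u t * v t / (\<alpha> * \<beta>)) has_integral C / (\<alpha> * \<beta>)) S"
    by (intro has_integral_divide uv_int)
  have "C / (\<alpha> * \<beta>) \<le> A / (p * A) + B / (q * B)"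
    by (rule has_integral_le[OF normalised_int bound_int Young])
  also have "\<dots> = 1" using pq \<open>A > 0\<close> \<open>B > 0\<close> by simp
  finally have "C \<le> \<alpha> * \<beta>" using \<alpha> \<beta> by (simp add: divide_le_eq)
  then show ?thesis by (simp add: \<alpha>_def \<beta>_def)
qed

lemma has_integral_t_times_one_minus_t_powr:
  fixes p :: real
  assumes p: "p > 0"
  shows "((\<lambda>t. t * (1 - t) powr p) has_integral 1 / ((p + 1) * (p + 2))) {0..1}"
proof -
  define F where "F t = (1 - t) powr (p + 2) / (p + 2) - (1 - t) powr (p + 1) / (p + 1)" for t :: real
  have "((\<lambda>t. t * (1 - t) powr p) has_integral (F 1 - F 0)) {0..1}"
  proof (rule fundamental_theorem_of_calculus_interior)
    show "continuous_on {0..1} F" unfolding F_def using p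
      by (intro continuous_intros continuous_on_powr') auto
    fix t :: real assume "t \<in> {0<..<1}"
    then have u: "1 - t > 0" by auto
    have "((\<lambda>t. (1 - t) powr r) has_real_derivative (r * (1 - t) powr (r - 1)) * (- 1)) (at t)"
      for r :: real
      by (rule DERIV_chain2[OF has_real_derivative_powr]) (use u in \<open>auto intro!: derivative_eq_intros\<close>)
    then have "(F has_real_derivative ((p + 2) * (1 - t) powr (p + 2 - 1)) * (- 1) / (p + 2)
                 - ((p + 1) * (1 - t) powr (p + 1 - 1)) * (- 1) / (p + 1)) (at t)"
      unfolding F_def by (intro DERIV_diff DERIV_cdivide)
    moreover have "((p + 2) * (1 - t) powr (p + 2 - 1)) * (- 1) / (p + 2)
        - ((p + 1) * (1 - t) powr (p + 1 - 1)) * (- 1) / (p + 1)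
        = (1 - t) powr p - (1 - t) powr p * (1 - t)"
      using p u by (simp add: add_ac powr_add)
    ultimately have "(F has_real_derivative t * (1 - t) powr p) (at t)"
      by (simp add: algebra_simps)
    then show "(F has_vector_derivative t * (1 - t) powr p) (at t)"
      by (simp add: has_real_derivative_iff_has_vector_derivative)
  qed simp
  moreover have "F 1 - F 0 = 1 / ((p + 1) * (p + 2))"
    unfolding F_def using p by (simp add: field_simps)
  ultimately show ?thesis by simp
qed

lemma beta_2:
  assumes "p > 0"
  shows "beta 2 (p + 1) = 1 / ((p + 1) * (p + 2))"
proof -
  have "beta 2 (p + 1) = integral {0..1} (\<lambda>t. t * (1 - t) powr p)"
    unfolding beta_def by (rule integral_cong) auto
  then show ?thesis
    using integral_unique[OF has_integral_t_times_one_minus_t_powr[OF assms]] by simp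
qed

text \<open>The constant of the corollary is at least the classical constant \<open>1/12\<close>:
  Hoelder's inequality for \<open>t(1-t) = (t\<^sup>1\<^sup>/\<^sup>p (1-t)) t\<^sup>1\<^sup>/\<^sup>q\<close> on \<open>[0,1]\<close> gives
  \<open>1/6 \<le> \<beta>(2,p+1)\<^sup>1\<^sup>/\<^sup>p (1/2)\<^sup>1\<^sup>/\<^sup>q\<close>.\<close>
lemma one_twelfth_le_beta_constant:
  fixes p q :: real
  assumes q: "q > 1" and p: "p = q / (q - 1)"
  shows "1 / 12 \<le> beta 2 (p + 1) powr (1 / p) / 2 powr (1 + 1 / q)"
proof -
  have p1: "p > 1" using q unfolding p by (simp add: less_divide_eq)
  have pq: "1 / p + 1 / q = 1" unfolding p using q by (simp add: field_simps)
  define \<beta> where "\<beta> = 1 / ((p + 1) * (p + 2))"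
  have "\<beta> > 0" using p1 by (simp add: \<beta>_def)
  have "1 / 6 \<le> \<beta> powr (1 / p) * (1 / 2) powr (1 / q)"
  proof (rule Hoelder_has_integral[OF p1 q pq, where S = "{0..1}"
      and u = "\<lambda>t. t powr (1 / p) * (1 - t)" and v = "\<lambda>t. t powr (1 / q)"])
    have "t powr (1 / p) * t powr (1 / q) = t" if "t \<ge> 0" for t :: real
      using that pq by (cases "t = 0") (simp_all add: powr_add [symmetric])
    moreover have "((\<lambda>t. t * (1 - t)) has_integral
                     ((1::real)^2 / 2 - 1^3 / 3) - (0^2 / 2 - 0^3 / 3)) {0..1}"
      by (rule fundamental_theorem_of_calculus)
        (auto simp: has_real_derivative_iff_has_vector_derivative [symmetric]
              intro!: derivative_eq_intros simp: algebra_simps power2_eq_square)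
    ultimately show "((\<lambda>t. t powr (1 / p) * (1 - t) * t powr (1 / q)) has_integral 1 / 6) {0..1}"
      by (subst has_integral_cong[where g = "\<lambda>t. t * (1 - t)"]) (auto simp: algebra_simps)
    show "((\<lambda>t. (t powr (1 / p) * (1 - t)) powr p) has_integral \<beta>) {0..1}"
      unfolding \<beta>_def using has_integral_t_times_one_minus_t_powr[of p] p1
      by (subst has_integral_cong[where g = "\<lambda>t. t * (1 - t) powr p"])
         (auto simp: powr_mult powr_powr)
    have "((\<lambda>t. t) has_integral ((1::real)^2 / 2 - 0^2 / 2)) {0..1}"
      by (rule fundamental_theorem_of_calculus)
        (auto simp: has_real_derivative_iff_has_vector_derivative [symmetric]
              intro!: derivative_eq_intros)
    moreover have "(t powr (1 / q)) powr q = t" if "t \<ge> 0" for t :: real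
      using q that by (simp add: powr_powr)
    ultimately show "((\<lambda>t. (t powr (1 / q)) powr q) has_integral 1 / 2) {0..1}"
      by (subst has_integral_cong[where g = "\<lambda>t. t"]) auto
  qed (use \<open>\<beta> > 0\<close> in auto)
  moreover have "beta 2 (p + 1) powr (1 / p) / 2 powr (1 + 1 / q)
                   = \<beta> powr (1 / p) * (1 / 2) powr (1 / q) / 2"
    using beta_2[of p] p1 by (simp add: \<beta>_def powr_add powr_divide)
  ultimately show ?thesis by linarith
qed

text \<open>Because
  that constant dominates the classical \<open>1/12\<close>, the bound follows from the classical
  estimate.\<close>
theorem corollary2p3:
  fixes I :: "real set" and f f' f'' :: "real \<Rightarrow> real" and a b q p M :: real
  assumes I_int: "is_interval I" and I_nonneg: "I \<subseteq> {0..}"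
    and f': "\<And>x. x \<in> interior I \<Longrightarrow> (f has_real_derivative f' x) (at x)"
    and f'': "\<And>x. x \<in> interior I \<Longrightarrow> (f' has_real_derivative f'' x) (at x)"
    and ab: "a \<in> interior I" "b \<in> interior I" "a < b"
    and L1: "f'' absolutely_integrable_on {a..b}"
    and q: "q > 1" and p: "p = q / (q - 1)"
    and qc: "quasi_convex_on {a..b} (\<lambda>x. \<bar>f'' x\<bar> powr q)"
    and bdd: "bdd_above ((\<lambda>x. \<bar>f'' x\<bar>) ` {a<..<b})"
    and M: "M = (SUP x\<in>{a<..<b}. \<bar>f'' x\<bar>)"
  shows "\<bar>(f a + f b) / 2 - (1 / (b - a)) * integral {a..b} f\<bar>
           \<le> (b - a)^2 / 2 powr (1 + 1 / q) * M * (beta 2 (p + 1)) powr (1 / p)"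
proof -
  have "{a..b} \<subseteq> interior I"
    using convex_contains_segment[THEN iffD1, OF convex_interior[OF is_interval_convex[OF I_int]],
        rule_format, OF ab(1,2)] ab(3)
    by (simp add: closed_segment_eq_real_ivl)
  moreover have M_bound: "\<bar>f'' x\<bar> \<le> M" if "x \<in> {a<..<b}" for x
    unfolding M by (rule cSUP_upper[OF that bdd])
  ultimately have "\<bar>trapezoid_defect f a b\<bar> \<le> M * (b - a)^3 / 12"
    using f' f'' by (intro trapezoid_error_bound[OF ab(3), where g' = f']) auto
  then have "\<bar>(f a + f b) / 2 - (1 / (b - a)) * integral {a..b} f\<bar> \<le> (b - a)^2 * M * (1 / 12)"
    using ab(3) by (simp add: trapezoid_defect_def field_simps abs_div power3_eq_cube
                              power2_eq_square divide_le_eq flip: abs_mult)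
  also have "\<dots> \<le> (b - a)^2 * M * (beta 2 (p + 1) powr (1 / p) / 2 powr (1 + 1 / q))"
    using M_bound[of "(a + b) / 2"] ab(3)
    by (intro mult_left_mono one_twelfth_le_beta_constant[OF q p]) auto
  finally show ?thesis by simp
qed

end
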